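(* Let $L$ be the Kirchhoff matrix and $\bar J$ the normalized matrix of maximum out-forests of a weighted digraph $\Gamma$. Then $\bar J$ is the eigenprojection of $L$, i.e., $\bar J$ is the idempotent matrix with range $N(L^{\nu})$ and kernel $R(L^{\nu})$, where $\nu$ is the index of $L$ (in fact $\nu=1$, so the range of $\bar J$ is $N(L)$ and its kernel is $R(L)$).
   Context: A weighted digraph $\Gamma$ has vertex set $\{1,\dots,n\}$, no loops, and each arc $j\to i$ ($j\ne i$) has a positive weight $a_{ij}$; $a_{ij}=0$ if there is no such arc. Its Kirchhoff matrix $L=[\ell_{ij}]$ has $\ell_{ij}=-a_{ij}$ for $j\ne i$ and $\ell_{ii}=\sum_{k\ne i}a_{ik}$. An out-forest of $\Gamma$ is a spanning subgraph whose weak components are diverging trees (rooted directed trees with paths from the root to all vertices); a maximum out-forest is one with the maximum number of arcs. The weight of a subgraph is the product of its arc weights. The normalized matrix of maximum out-forests $\bar J$ has $\bar J_{ij}$ equal to the total weight of the maximum out-forests of $\Gamma$ in which $i$ belongs to the tree rooted at $j$, divided by the total weight of all maximum out-forests. For a square matrix $A$, $R(A)$ and $N(A)$ denote range and kernel, and the index of $A$ is the least $k\ge0$ with $\operatorname{rank}A^{k+1}=\operatorname{rank}A^k$. *)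

theory Defs
  imports "HOL-Analysis.Analysis"
begin

text \<open>Vertices are the elements of a finite type 'n. A weighted digraph is given by
  a weight function a, where a i j > 0 is the weight of the arc j -> i, and a i j = 0
  means there is no such arc.\<close>

definition weighted_digraph :: "('n::finite \<Rightarrow> 'n \<Rightarrow> real) \<Rightarrow> bool" where
  "weighted_digraph a \<longleftrightarrow> (\<forall>i. a i i = 0) \<and> (\<forall>i j. a i j \<ge> 0)"

text \<open>Arcs as pairs (tail, head): (j,i) is the arc j -> i.\<close>
definition arcs :: "('n::finite \<Rightarrow> 'n \<Rightarrow> real) \<Rightarrow> ('n \<times> 'n) set" where
  "arcs a = {(j, i). j \<noteq> i \<and> a i j > 0}"

definition kirchhoff :: "('n::finite \<Rightarrow> 'n \<Rightarrow> real) \<Rightarrow> real^'n^'n" where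
  "kirchhoff a = (\<chi> i j. if i = j then (\<Sum>k\<in>UNIV - {i}. a i k) else - a i j)"

definition weak_comp :: "('n \<times> 'n) set \<Rightarrow> 'n \<Rightarrow> 'n set" where
  "weak_comp F v = {u. (v, u) \<in> (F \<union> F\<inverse>)\<^sup>*}"

text \<open>C (a vertex set) together with the arcs of F inside C is a diverging tree
  rooted at r: r reaches every vertex of C, and the underlying graph is a tree
  (connected with |C| - 1 edges; connectivity follows from reachability from r).\<close>
definition diverging_tree_on :: "('n \<times> 'n) set \<Rightarrow> 'n set \<Rightarrow> 'n \<Rightarrow> bool" where
  "diverging_tree_on F C r \<longleftrightarrow> r \<in> C \<and>
     (\<forall>v\<in>C. (r, v) \<in> (F \<inter> (C \<times> C))\<^sup>*) \<and>
     card (F \<inter> (C \<times> C)) = card C - 1"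

definition out_forest :: "('n::finite \<Rightarrow> 'n \<Rightarrow> real) \<Rightarrow> ('n \<times> 'n) set \<Rightarrow> bool" where
  "out_forest a F \<longleftrightarrow> F \<subseteq> arcs a \<and>
     (\<forall>v. \<exists>r. diverging_tree_on F (weak_comp F v) r)"

definition max_out_forest :: "('n::finite \<Rightarrow> 'n \<Rightarrow> real) \<Rightarrow> ('n \<times> 'n) set \<Rightarrow> bool" where
  "max_out_forest a F \<longleftrightarrow> out_forest a F \<and>
     (\<forall>G. out_forest a G \<longrightarrow> card G \<le> card F)"

definition sg_weight :: "('n::finite \<Rightarrow> 'n \<Rightarrow> real) \<Rightarrow> ('n \<times> 'n) set \<Rightarrow> real" where
  "sg_weight a F = (\<Prod>(j, i)\<in>F. a i j)"

definition in_tree_rooted_at :: "('n \<times> 'n) set \<Rightarrow> 'n \<Rightarrow> 'n \<Rightarrow> bool" where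
  "in_tree_rooted_at F i j \<longleftrightarrow> diverging_tree_on F (weak_comp F i) j"

definition norm_max_out_forest_matrix :: "('n::finite \<Rightarrow> 'n \<Rightarrow> real) \<Rightarrow> real^'n^'n" where
  "norm_max_out_forest_matrix a =
     (\<chi> i j. (\<Sum>F\<in>{F. max_out_forest a F \<and> in_tree_rooted_at F i j}. sg_weight a F)
            / (\<Sum>F\<in>{F. max_out_forest a F}. sg_weight a F))"

fun matpow :: "'a::semiring_1^'n^'n \<Rightarrow> nat \<Rightarrow> 'a^'n^'n" where
  "matpow A 0 = mat 1"
| "matpow A (Suc k) = A ** matpow A k"

definition mat_index :: "real^'n^'n \<Rightarrow> nat" where
  "mat_index A = (LEAST k. rank (matpow A (Suc k)) = rank (matpow A k))"

definition mat_range :: "real^'n^'m \<Rightarrow> (real^'m) set" where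
  "mat_range A = range (\<lambda>x. A *v x)"

definition mat_kernel :: "real^'n^'m \<Rightarrow> (real^'n) set" where
  "mat_kernel A = {x. A *v x = 0}"

definition is_eigenprojection :: "real^'n^'n \<Rightarrow> real^'n^'n \<Rightarrow> bool" where
  "is_eigenprojection P A \<longleftrightarrow> P ** P = P \<and>
     mat_range P = mat_kernel (matpow A (mat_index A)) \<and>
     mat_kernel P = mat_range (matpow A (mat_index A))"

end

theory Submission
  imports Defs
begin

text \<open>
  Out-forests are first identified with branchings (acyclic arc sets in which every
  vertex has at most one parent) consisting of arcs of the digraph; in a branching every
  vertex x has a unique root, and "x belongs to the tree rooted at j" means that this
  root is j.  A forest with m+1 arcs in which vertex i is not a root is obtained in
  exactly one way by attaching i, as a root of a forest with m arcs, to an admissible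
  new parent.  From this bijection we derive the matrix-forest recurrence
      L Q_m + Q_(m+1) = sigma_(m+1) I,
  where Q_m is the matrix of forests with m arcs and sigma_m their total weight.

  With nu the number of arcs of a maximum out-forest and J = Q_nu / sigma_nu, the
  recurrence at nu gives L J = 0 and at nu - 1 gives I - J = L X.  A maximum principle
  shows that the kernel and the range of L intersect trivially; abstract linear
  algebra then makes J the projection onto N(L) along R(L), and R(L^2) = R(L) together
  with the singularity of L (constant vectors lie in its kernel) gives index 1.
\<close>

definition indeg_le1 :: "('v \<times> 'v) set \<Rightarrow> bool" where
  "indeg_le1 F \<longleftrightarrow> (\<forall>p q u. (p, u) \<in> F \<longrightarrow> (q, u) \<in> F \<longrightarrow> p = q)"

definition branching :: "('v \<times> 'v) set \<Rightarrow> bool" where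
  "branching F \<longleftrightarrow> indeg_le1 F \<and> acyclic F"

definition is_root :: "('v \<times> 'v) set \<Rightarrow> 'v \<Rightarrow> bool" where
  "is_root F r \<longleftrightarrow> (\<forall>x. (x, r) \<notin> F)"

definition tree_root :: "('v \<times> 'v) set \<Rightarrow> 'v \<Rightarrow> 'v" where
  "tree_root F x = (THE r. (r, x) \<in> F\<^sup>* \<and> is_root F r)"

lemma ancestors_comparable:
  assumes "indeg_le1 F" "(r1, x) \<in> F\<^sup>*" "(r2, x) \<in> F\<^sup>*"
  shows "(r1, r2) \<in> F\<^sup>* \<or> (r2, r1) \<in> F\<^sup>*"
  using assms(2,3)
proof (induction arbitrary: r2 rule: rtrancl_induct)
  case base
  then show ?case by simp
next
  case (step w x)
  from step.prems show ?case
  proof (cases rule: rtranclE)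
    case base
    then show ?thesis using step.hyps by (meson rtrancl.rtrancl_into_rtrancl)
  next
    case (step y)
    then have "y = w" using assms(1) \<open>(w, x) \<in> F\<close> unfolding indeg_le1_def by blast
    then show ?thesis using step.IH step by blast
  qed
qed

lemma ancestor_of_root:
  assumes "(r1, r2) \<in> F\<^sup>*" "is_root F r2"
  shows "r1 = r2"
  using assms by (metis is_root_def rtranclE)

lemma root_unique:
  assumes "indeg_le1 F" "(r1, x) \<in> F\<^sup>*" "(r2, x) \<in> F\<^sup>*" "is_root F r1" "is_root F r2"
  shows "r1 = r2"
  using ancestors_comparable[OF assms(1-3)] ancestor_of_root assms(4,5) by metis

lemma root_exists:
  fixes F :: "('v::finite \<times> 'v) set"
  assumes "acyclic F"
  shows "\<exists>r. (r, x) \<in> F\<^sup>* \<and> is_root F r"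
proof -
  have "wf F" using finite_acyclic_wf[OF finite assms] .
  moreover have "x \<in> {r. (r, x) \<in> F\<^sup>*}" by simp
  ultimately obtain r where r: "r \<in> {r. (r, x) \<in> F\<^sup>*}"
    and minimal: "\<And>y. (y, r) \<in> F \<Longrightarrow> y \<notin> {r. (r, x) \<in> F\<^sup>*}"
    using wf_eq_minimal[THEN iffD1, of F] by metis
  have "is_root F r" unfolding is_root_def
  proof (intro allI notI)
    fix y assume "(y, r) \<in> F"
    then have "(y, x) \<in> F\<^sup>*" using r by (simp add: converse_rtrancl_into_rtrancl)
    then show False using minimal[OF \<open>(y, r) \<in> F\<close>] by simp
  qed
  with r show ?thesis by blast
qed

lemma root_spec:
  fixes F :: "('v::finite \<times> 'v) set"
  assumes "branching F"
  shows "(tree_root F x, x) \<in> F\<^sup>*" "is_root F (tree_root F x)"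
proof -
  have ind: "indeg_le1 F" and ac: "acyclic F" using assms branching_def by auto
  obtain r where r: "(r, x) \<in> F\<^sup>*" "is_root F r" using root_exists[OF ac] by blast
  have "tree_root F x = r" unfolding tree_root_def
    by (rule the_equality) (use r root_unique[OF ind _ r(1) _ r(2)] in blast)+
  then show "(tree_root F x, x) \<in> F\<^sup>*" "is_root F (tree_root F x)" using r by auto
qed

lemma root_eqI:
  fixes F :: "('v::finite \<times> 'v) set"
  assumes "branching F" "(r, x) \<in> F\<^sup>*" "is_root F r"
  shows "tree_root F x = r"
  using assms root_spec[OF assms(1)] root_unique branching_def by metis

lemma root_of_root: "branching F \<Longrightarrow> is_root F i \<Longrightarrow> tree_root F i = (i::'v::finite)"
  by (simp add: root_eqI)

lemma root_descendant:
  fixes F :: "('v::finite \<times> 'v) set"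
  assumes "branching F" "(i, k) \<in> F\<^sup>*"
  shows "tree_root F k = tree_root F i"
  using root_eqI[OF assms(1) rtrancl_trans[OF root_spec(1)[OF assms(1)] assms(2)]
      root_spec(2)[OF assms(1)]] .

lemma weak_comp_branching:
  fixes F :: "('v::finite \<times> 'v) set"
  assumes "branching F"
  shows "weak_comp F v = {u. tree_root F u = tree_root F v}"
proof
  show "weak_comp F v \<subseteq> {u. tree_root F u = tree_root F v}"
  proof
    fix u assume "u \<in> weak_comp F v"
    then have "(v, u) \<in> (F \<union> F\<inverse>)\<^sup>*" by (simp add: weak_comp_def)
    then show "u \<in> {u. tree_root F u = tree_root F v}"
    proof (induction rule: rtrancl_induct)
      case (step w u)
      then show ?case
        using root_descendant[OF assms] by (metis UnE converse_iff mem_Collect_eq r_into_rtrancl)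
    qed simp
  qed
next
  show "{u. tree_root F u = tree_root F v} \<subseteq> weak_comp F v"
  proof
    fix u assume "u \<in> {u. tree_root F u = tree_root F v}"
    then have "(tree_root F v, u) \<in> (F \<union> F\<inverse>)\<^sup>*"
      using root_spec(1)[OF assms, of u] by (metis mem_Collect_eq in_rtrancl_UnI)
    moreover have "(v, tree_root F v) \<in> (F \<union> F\<inverse>)\<^sup>*"
      using root_spec(1)[OF assms, of v] by (metis rtrancl_converseI in_rtrancl_UnI)
    ultimately show "u \<in> weak_comp F v" unfolding weak_comp_def by (meson mem_Collect_eq rtrancl_trans)
  qed
qed

text \<open>Parents of vertices of a weak component lie in that component, so the arcs of
  F entering a component are exactly the arcs inside it.\<close>

lemma weak_comp_parent:
  assumes "(p, u) \<in> F" "u \<in> weak_comp F v"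
  shows "p \<in> weak_comp F v"
  using assms unfolding weak_comp_def by (auto intro: rtrancl_into_rtrancl)

lemma heads_cover:
  assumes "\<forall>u\<in>C. (r, u) \<in> (F \<inter> C \<times> C)\<^sup>*"
  shows "C - {r} \<subseteq> snd ` (F \<inter> C \<times> C)"
proof
  fix u assume u: "u \<in> C - {r}"
  then have "(r, u) \<in> (F \<inter> C \<times> C)\<^sup>+" using assms by (auto simp: rtrancl_eq_or_trancl)
  from tranclD2[OF this] obtain y where "(y, u) \<in> F \<inter> C \<times> C" by blast
  then show "u \<in> snd ` (F \<inter> C \<times> C)" by force
qed

lemma diverging_tree_on_iff_heads:
  fixes F :: "('v::finite \<times> 'v) set"
  assumes r: "r \<in> C" and reach: "\<forall>u\<in>C. (r, u) \<in> (F \<inter> C \<times> C)\<^sup>*"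
  shows "diverging_tree_on F C r \<longleftrightarrow> bij_betw snd (F \<inter> C \<times> C) (C - {r})"
proof -
  define FC where "FC = F \<inter> C \<times> C"
  have cover: "C - {r} \<subseteq> snd ` FC" using heads_cover[OF reach] FC_def by simp
  have fin: "finite FC" "finite C" by simp_all
  have "card FC = card C - 1 \<longleftrightarrow> bij_betw snd FC (C - {r})"
  proof
    assume card: "card FC = card C - 1"
    have "card (snd ` FC) \<le> card (C - {r})"
      using card card_image_le[OF fin(1)] r by (simp add: card_Diff_singleton)
    then have img: "snd ` FC = C - {r}"
      using cover by (metis card_seteq finite_imageI fin(1))
    then have "card (snd ` FC) = card FC" using card r by (simp add: card_Diff_singleton)
    then show "bij_betw snd FC (C - {r})"
      using img fin(1) by (simp add: bij_betw_def inj_on_iff_eq_card)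
  qed (use r bij_betw_same_card in \<open>fastforce simp: card_Diff_singleton\<close>)
  then show ?thesis unfolding diverging_tree_on_def FC_def using r reach by blast
qed

lemma branching_diverging_tree:
  fixes F :: "('v::finite \<times> 'v) set"
  assumes br: "branching F"
  shows "diverging_tree_on F (weak_comp F v) (tree_root F v)"
proof -
  define r where "r = tree_root F v"
  define C where "C = weak_comp F v"
  have C: "C = {x. tree_root F x = r}" using weak_comp_branching[OF br] by (simp add: C_def r_def)
  have rC: "r \<in> C" using C root_of_root[OF br root_spec(2)[OF br]] r_def by simp
  have reach: "\<forall>u\<in>C. (r, u) \<in> (F \<inter> C \<times> C)\<^sup>*"
  proof
    fix u assume "u \<in> C"
    then have "(r, u) \<in> F\<^sup>*" using C root_spec(1)[OF br, of u] by simp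
    then show "(r, u) \<in> (F \<inter> C \<times> C)\<^sup>*"
    proof (induction rule: rtrancl_induct)
      case (step w u)
      have "w \<in> C" "u \<in> C"
        using root_descendant[OF br step.hyps(1)] root_descendant[OF br r_into_rtrancl[OF step.hyps(2)]]
          rC C by auto
      then show ?case using step by (simp add: rtrancl.rtrancl_into_rtrancl)
    qed simp
  qed
  have "bij_betw snd (F \<inter> C \<times> C) (C - {r})"
    unfolding bij_betw_def
  proof
    show "inj_on snd (F \<inter> C \<times> C)"
      using br unfolding branching_def indeg_le1_def inj_on_def by force
    show "snd ` (F \<inter> C \<times> C) = C - {r}"
      using heads_cover[OF reach] root_spec(2)[OF br, of v] unfolding r_def[symmetric] is_root_def
      by force
  qed
  then show ?thesis using diverging_tree_on_iff_heads[OF rC reach] C_def r_def by blast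
qed

lemma diverging_tree_weak_comp:
  fixes F :: "('v::finite \<times> 'v) set"
  assumes dt: "diverging_tree_on F (weak_comp F v) r"
  shows "is_root F r" "(r, v) \<in> F\<^sup>*"
    "\<And>p q u. (p, u) \<in> F \<Longrightarrow> (q, u) \<in> F \<Longrightarrow> u \<in> weak_comp F v \<Longrightarrow> p = q"
proof -
  define C where "C = weak_comp F v"
  have dtC: "diverging_tree_on F C r" using dt by (simp add: C_def)
  then have rC: "r \<in> C" and reach: "\<forall>u\<in>C. (r, u) \<in> (F \<inter> C \<times> C)\<^sup>*"
    unfolding diverging_tree_on_def by blast+
  have bij: "bij_betw snd (F \<inter> C \<times> C) (C - {r})"
    using dtC diverging_tree_on_iff_heads[OF rC reach] by blast
  have inside: "(p, u) \<in> F \<inter> C \<times> C" if "(p, u) \<in> F" "u \<in> C" for p u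
    using that weak_comp_parent[of p u F v] unfolding C_def by blast
  show "is_root F r" unfolding is_root_def
  proof (intro allI notI)
    fix x assume "(x, r) \<in> F"
    then have "r \<in> snd ` (F \<inter> C \<times> C)" using inside[OF _ rC] by force
    then show False using bij by (simp add: bij_betw_def)
  qed
  have "v \<in> C" unfolding C_def weak_comp_def by simp
  moreover have "(F \<inter> C \<times> C)\<^sup>* \<subseteq> F\<^sup>*" by (rule rtrancl_mono) blast
  ultimately show "(r, v) \<in> F\<^sup>*" using reach by blast
  fix p q u assume pu: "(p, u) \<in> F" and qu: "(q, u) \<in> F" and "u \<in> weak_comp F v"
  then have uC: "u \<in> C" by (simp add: C_def)
  have "inj_on snd (F \<inter> C \<times> C)" using bij by (simp add: bij_betw_def)
  from inj_onD[OF this _ inside[OF pu uC] inside[OF qu uC]] show "p = q" by simp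
qed

lemma root_not_on_cycle:
  assumes "indeg_le1 F" "is_root F r" "(r, u) \<in> F\<^sup>*"
  shows "(u, u) \<notin> F\<^sup>+"
  using assms(3)
proof (induction rule: rtrancl_induct)
  case base
  show ?case using assms(2) by (auto simp: is_root_def dest: tranclD2)
next
  case (step w u)
  show ?case
  proof
    assume "(u, u) \<in> F\<^sup>+"
    from tranclD2[OF this] obtain y where y: "(u, y) \<in> F\<^sup>*" "(y, u) \<in> F" by blast
    then have "y = w" using assms(1) step.hyps(2) unfolding indeg_le1_def by blast
    then have "(w, w) \<in> F\<^sup>+" using y step.hyps(2) by (simp add: rtrancl_into_trancl2)
    then show False using step.IH by blast
  qed
qed

lemma out_forest_iff_branching:
  fixes a :: "'n::finite \<Rightarrow> 'n \<Rightarrow> real"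
  shows "out_forest a F \<longleftrightarrow> F \<subseteq> arcs a \<and> branching F"
proof
  assume H: "out_forest a F"
  have dt: "\<exists>r. diverging_tree_on F (weak_comp F v) r" for v using H unfolding out_forest_def by blast
  have ind: "indeg_le1 F" unfolding indeg_le1_def
  proof (intro allI impI)
    fix p q u assume "(p, u) \<in> F" "(q, u) \<in> F"
    moreover have "u \<in> weak_comp F u" by (simp add: weak_comp_def)
    ultimately show "p = q" using dt[of u] diverging_tree_weak_comp(3) by blast
  qed
  have "acyclic F"
    unfolding acyclic_def
    using dt root_not_on_cycle[OF ind] diverging_tree_weak_comp(1,2) by blast
  then show "F \<subseteq> arcs a \<and> branching F" using H ind unfolding out_forest_def branching_def by blast
next
  assume "F \<subseteq> arcs a \<and> branching F"
  then show "out_forest a F" unfolding out_forest_def using branching_diverging_tree by blast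
qed

lemma in_tree_rooted_at_iff:
  fixes F :: "('v::finite \<times> 'v) set"
  assumes "branching F"
  shows "in_tree_rooted_at F i j \<longleftrightarrow> j = tree_root F i"
  unfolding in_tree_rooted_at_def
  using root_eqI[OF assms] diverging_tree_weak_comp(1,2) branching_diverging_tree[OF assms] by metis

text \<open>Forests of the digraph with exactly m arcs, those among them in which i is a root,
  and the admissible new parents of i in G: tails p of arcs p -> i that are not
  descendants of i, so that adding (p,i) creates no cycle.\<close>

definition forests :: "('n::finite \<Rightarrow> 'n \<Rightarrow> real) \<Rightarrow> nat \<Rightarrow> ('n \<times> 'n) set set" where
  "forests a m = {F. out_forest a F \<and> card F = m}"

definition rooted_forests :: "('n::finite \<Rightarrow> 'n \<Rightarrow> real) \<Rightarrow> nat \<Rightarrow> 'n \<Rightarrow> ('n \<times> 'n) set set" where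
  "rooted_forests a m i = {F \<in> forests a m. is_root F i}"

definition new_parents :: "('n::finite \<Rightarrow> 'n \<Rightarrow> real) \<Rightarrow> ('n \<times> 'n) set \<Rightarrow> 'n \<Rightarrow> 'n set" where
  "new_parents a G i = {p. a i p > 0 \<and> (i, p) \<notin> G\<^sup>*}"

lemma branching_subset: "branching F \<Longrightarrow> G \<subseteq> F \<Longrightarrow> branching G"
  unfolding branching_def indeg_le1_def using acyclic_subset by blast

lemma sg_weight_insert:
  "(p, i) \<notin> G \<Longrightarrow> sg_weight a (insert (p, i) G) = a i p * sg_weight a G"
  unfolding sg_weight_def by (simp add: prod.insert)

lemma branching_empty: "branching {}"
  by (simp add: branching_def indeg_le1_def acyclic_def)

lemma forests_zero: "forests a 0 = {{}}"
  by (auto simp: forests_def out_forest_iff_branching branching_empty)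

lemma forest_attach:
  assumes G: "out_forest a G" and i: "is_root G i" and p: "p \<in> new_parents a G i"
  shows "out_forest a (insert (p, i) G)" "(p, i) \<notin> G"
proof -
  have br: "branching G" and arcs: "G \<subseteq> arcs a" using G out_forest_iff_branching by auto
  have no_path: "(i, p) \<notin> G\<^sup>*" and api: "a i p > 0" using p new_parents_def by auto
  then have "p \<noteq> i" by auto
  then have "(p, i) \<in> arcs a" using api by (simp add: arcs_def)
  show "(p, i) \<notin> G" using i is_root_def by metis
  have "indeg_le1 (insert (p, i) G)"
    using br i unfolding branching_def indeg_le1_def is_root_def by blast
  moreover have "acyclic (insert (p, i) G)"
    using br no_path by (simp add: branching_def acyclic_insert rtrancl_converse)
  ultimately show "out_forest a (insert (p, i) G)"
    using arcs \<open>(p, i) \<in> arcs a\<close> by (simp add: out_forest_iff_branching branching_def)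
qed

lemma root_attach:
  assumes G: "out_forest a G" and i: "is_root G i" and p: "p \<in> new_parents a G i"
  shows "\<And>k. (i, k) \<notin> G\<^sup>* \<Longrightarrow> tree_root (insert (p, i) G) k = tree_root G k"
    "tree_root (insert (p, i) G) i = tree_root G p"
proof -
  define F where "F = insert (p, i) G"
  have brF: "branching F" using forest_attach(1)[OF assms] out_forest_iff_branching F_def by blast
  have brG: "branching G" using G out_forest_iff_branching by blast
  have sub: "G\<^sup>* \<subseteq> F\<^sup>*" unfolding F_def by (rule rtrancl_mono) blast
  have old_root: "tree_root F x = tree_root G x" if "(i, x) \<notin> G\<^sup>*" for x
  proof -
    have "tree_root G x \<noteq> i" using that root_spec(1)[OF brG, of x] by auto
    then have "is_root F (tree_root G x)" using root_spec(2)[OF brG, of x] by (simp add: F_def is_root_def)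
    moreover have "(tree_root G x, x) \<in> F\<^sup>*" using root_spec(1)[OF brG, of x] sub by blast
    ultimately show ?thesis using root_eqI[OF brF] by blast
  qed
  show "tree_root F k = tree_root G k" if "(i, k) \<notin> G\<^sup>*" for k using old_root[OF that] .
  have "(i, p) \<notin> G\<^sup>*" using p new_parents_def by auto
  moreover have "(p, i) \<in> F" unfolding F_def by simp
  ultimately show "tree_root F i = tree_root G p"
    using old_root root_descendant[OF brF r_into_rtrancl] by metis
qed

lemma forest_detach:
  assumes F: "F \<in> forests a (Suc m)" and pi: "(p, i) \<in> F"
  shows "F - {(p, i)} \<in> rooted_forests a m i" "p \<in> new_parents a (F - {(p, i)}) i"
proof -
  define G where "G = F - {(p, i)}"
  have br: "branching F" and arcs: "F \<subseteq> arcs a" and card: "card F = Suc m"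
    using F by (auto simp: forests_def out_forest_iff_branching)
  have "out_forest a G"
    using branching_subset[OF br] arcs by (auto simp: G_def out_forest_iff_branching)
  moreover have "card G = m" using card pi by (simp add: G_def)
  moreover have "is_root G i"
    using br pi unfolding is_root_def G_def branching_def indeg_le1_def by blast
  ultimately show "G \<in> rooted_forests a m i" by (simp add: rooted_forests_def forests_def)
  have "a i p > 0" using arcs pi by (auto simp: arcs_def)
  moreover have "(i, p) \<notin> G\<^sup>*"
  proof
    assume "(i, p) \<in> G\<^sup>*"
    then have "(i, p) \<in> F\<^sup>*" using rtrancl_mono[of G F] G_def by blast
    then have "(i, i) \<in> F\<^sup>+" using pi by (rule rtrancl_into_trancl1)
    then show False using br by (simp add: branching_def acyclic_def)
  qed
  ultimately show "p \<in> new_parents a G i" by (simp add: new_parents_def)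
qed

lemma attach_bij:
  "bij_betw (\<lambda>(G, p). insert (p, i) G) (SIGMA G:rooted_forests a m i. new_parents a G i)
     (forests a (Suc m) - rooted_forests a (Suc m) i)"
proof (rule bij_betwI')
  fix x y assume x: "x \<in> (SIGMA G:rooted_forests a m i. new_parents a G i)"
    and y: "y \<in> (SIGMA G:rooted_forests a m i. new_parents a G i)"
  obtain G p G' p' where xy: "x = (G, p)" "y = (G', p')" by fastforce
  have roots: "is_root G i" "is_root G' i" using x y xy by (auto simp: rooted_forests_def)
  show "((\<lambda>(G, p). insert (p, i) G) x = (\<lambda>(G, p). insert (p, i) G) y) = (x = y)"
  proof
    assume eq: "(\<lambda>(G, p). insert (p, i) G) x = (\<lambda>(G, p). insert (p, i) G) y"
    have "G = insert (p, i) G - {e. snd e = i}" using roots by (auto simp: is_root_def)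
    also have "\<dots> = insert (p', i) G' - {e. snd e = i}" using eq xy by simp
    also have "\<dots> = G'" using roots by (auto simp: is_root_def)
    finally have "G = G'" .
    moreover have "p = p'" using eq roots xy unfolding is_root_def by auto
    ultimately show "x = y" using xy by simp
  qed simp
next
  fix x assume "x \<in> (SIGMA G:rooted_forests a m i. new_parents a G i)"
  then obtain G p where x: "x = (G, p)" and G: "G \<in> rooted_forests a m i"
    and p: "p \<in> new_parents a G i" by blast
  have "out_forest a G" "is_root G i" using G by (auto simp: rooted_forests_def forests_def)
  with forest_attach[OF this p] show "(\<lambda>(G, p). insert (p, i) G) x
      \<in> forests a (Suc m) - rooted_forests a (Suc m) i"
    using G x by (auto simp: rooted_forests_def forests_def is_root_def)
next
  fix F assume F: "F \<in> forests a (Suc m) - rooted_forests a (Suc m) i"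
  then obtain p where pi: "(p, i) \<in> F" by (auto simp: rooted_forests_def is_root_def)
  have "F \<in> forests a (Suc m)" using F by simp
  from forest_detach[OF this pi]
  have "(F - {(p, i)}, p) \<in> (SIGMA G:rooted_forests a m i. new_parents a G i)" by simp
  moreover have "F = (\<lambda>(G, p). insert (p, i) G) (F - {(p, i)}, p)" using pi by auto
  ultimately show "\<exists>x\<in>(SIGMA G:rooted_forests a m i. new_parents a G i).
      F = (\<lambda>(G, p). insert (p, i) G) x" ..
qed

lemma sum_forests_Suc:
  fixes f :: "('n::finite \<times> 'n) set \<Rightarrow> real"
  shows "(\<Sum>F\<in>forests a (Suc m). f F) = (\<Sum>F\<in>rooted_forests a (Suc m) i. f F)
     + (\<Sum>G\<in>rooted_forests a m i. \<Sum>p\<in>new_parents a G i. f (insert (p, i) G))"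
proof -
  have "(\<Sum>F\<in>forests a (Suc m). f F) = (\<Sum>F\<in>rooted_forests a (Suc m) i. f F)
      + (\<Sum>F\<in>forests a (Suc m) - rooted_forests a (Suc m) i. f F)"
    using sum.subset_diff[of "rooted_forests a (Suc m) i" "forests a (Suc m)" f]
    by (simp add: rooted_forests_def add.commute)
  also have "(\<Sum>F\<in>forests a (Suc m) - rooted_forests a (Suc m) i. f F)
      = (\<Sum>(G, p)\<in>(SIGMA G:rooted_forests a m i. new_parents a G i). f (insert (p, i) G))"
    using sum.reindex_bij_betw[OF attach_bij, of f] by (simp add: case_prod_beta)
  also have "\<dots> = (\<Sum>G\<in>rooted_forests a m i. \<Sum>p\<in>new_parents a G i. f (insert (p, i) G))"
    by (rule sum.Sigma[symmetric]) auto
  finally show ?thesis .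
qed

lemma kirchhoff_mult_vec:
  "(kirchhoff a *v x) $ i = (\<Sum>k\<in>UNIV. a i k * (x $ i - x $ k))"
proof -
  have "(kirchhoff a *v x) $ i = (\<Sum>k\<in>UNIV - {i}. a i k) * x $ i + (\<Sum>k\<in>UNIV - {i}. - a i k * x $ k)"
    by (simp add: matrix_vector_mult_def kirchhoff_def sum.remove[of UNIV i])
  also have "\<dots> = (\<Sum>k\<in>UNIV - {i}. a i k * (x $ i - x $ k))"
    by (simp add: sum_distrib_right sum_subtractf[symmetric] right_diff_distrib sum_negf)
  also have "\<dots> = (\<Sum>k\<in>UNIV. a i k * (x $ i - x $ k))"
    by (simp add: sum.remove[of UNIV i])
  finally show ?thesis .
qed

lemma kirchhoff_mult_mat:
  "(kirchhoff a ** X) $ i $ j = (\<Sum>k\<in>UNIV. a i k * (X $ i $ j - X $ k $ j))"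
  using kirchhoff_mult_vec[of a "\<chi> k. X $ k $ j" i]
  by (simp add: matrix_matrix_mult_def matrix_vector_mult_def)

definition forest_matrix :: "('n::finite \<Rightarrow> 'n \<Rightarrow> real) \<Rightarrow> nat \<Rightarrow> real^'n^'n" where
  "forest_matrix a m = (\<chi> i j. \<Sum>F\<in>forests a m. sg_weight a F * of_bool (tree_root F i = j))"

definition forest_weight :: "('n::finite \<Rightarrow> 'n \<Rightarrow> real) \<Rightarrow> nat \<Rightarrow> real" where
  "forest_weight a m = (\<Sum>F\<in>forests a m. sg_weight a F)"

lemma rooted_forests_zero: "rooted_forests a 0 i = {{}}"
  by (auto simp: rooted_forests_def is_root_def forests_zero)

lemma rooted_forestsD:
  "G \<in> rooted_forests a m i \<Longrightarrow> out_forest a G \<and> branching G \<and> is_root G i \<and> tree_root G i = i"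
  by (simp add: rooted_forests_def forests_def out_forest_iff_branching root_of_root)

text \<open>Applying row i of the Kirchhoff matrix to a function of the roots of a branching F,
  only admissible new parents k of i contribute: every other out-neighbour of i is a
  descendant of i and shares its root.\<close>

lemma kirchhoff_row_forest:
  fixes a :: "'n::finite \<Rightarrow> 'n \<Rightarrow> real" and h :: "'n \<Rightarrow> real"
  assumes wd: "weighted_digraph a" and br: "branching F" and sub: "G \<subseteq> F"
  shows "(\<Sum>k\<in>UNIV. a i k * (h (tree_root F i) - h (tree_root F k)))
       = (\<Sum>k\<in>new_parents a G i. a i k * (h (tree_root F i) - h (tree_root F k)))"
proof (rule sum.mono_neutral_right)
  show "\<forall>k\<in>UNIV - new_parents a G i. a i k * (h (tree_root F i) - h (tree_root F k)) = 0"
  proof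
    fix k assume "k \<in> UNIV - new_parents a G i"
    then have "a i k \<le> 0 \<or> (i, k) \<in> G\<^sup>*" by (auto simp: new_parents_def)
    moreover have "a i k \<ge> 0" using wd by (simp add: weighted_digraph_def)
    ultimately consider "a i k = 0" | "(i, k) \<in> G\<^sup>*" by fastforce
    then show "a i k * (h (tree_root F i) - h (tree_root F k)) = 0"
    proof cases
      case 2
      then have "(i, k) \<in> F\<^sup>*" using rtrancl_mono[OF sub] by blast
      then show ?thesis using root_descendant[OF br] by simp
    qed simp
  qed
qed auto

lemma antisymmetric_double_sum:
  fixes c h :: "'v \<Rightarrow> real"
  shows "(\<Sum>p\<in>P. \<Sum>k\<in>P. c p * c k * (h p - h k)) = 0"
proof -
  have "(\<Sum>p\<in>P. \<Sum>k\<in>P. c p * c k * h k) = (\<Sum>k\<in>P. \<Sum>p\<in>P. c p * c k * h k)"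
    by (rule sum.swap)
  also have "\<dots> = (\<Sum>p\<in>P. \<Sum>k\<in>P. c p * c k * h p)"
    by (simp add: mult.commute)
  finally show ?thesis by (simp add: sum_subtractf right_diff_distrib)
qed

definition root_row :: "('n::finite \<Rightarrow> 'n \<Rightarrow> real) \<Rightarrow> ('n \<times> 'n) set \<Rightarrow> 'n \<Rightarrow> 'n \<Rightarrow> real" where
  "root_row a F i j = (\<Sum>k\<in>UNIV. a i k * (of_bool (tree_root F i = j) - of_bool (tree_root F k = j)))"

text \<open>The contributions of the forests in which i is attached to a new parent cancel:
  they form an antisymmetric double sum over pairs of admissible parents.\<close>

lemma root_row_attached:
  fixes a :: "'n::finite \<Rightarrow> 'n \<Rightarrow> real"
  assumes wd: "weighted_digraph a" and G: "G \<in> rooted_forests a m i"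
  shows "(\<Sum>p\<in>new_parents a G i. sg_weight a (insert (p, i) G) * root_row a (insert (p, i) G) i j) = 0"
proof -
  define h where "h x = (of_bool (tree_root G x = j) :: real)" for x
  have G': "out_forest a G" "is_root G i" using rooted_forestsD[OF G] by auto
  have row: "sg_weight a (insert (p, i) G) * root_row a (insert (p, i) G) i j
    = (\<Sum>k\<in>new_parents a G i. a i p * a i k * sg_weight a G * (h p - h k))"
    if p: "p \<in> new_parents a G i" for p
  proof -
    have br: "branching (insert (p, i) G)"
      using forest_attach(1)[OF G' p] out_forest_iff_branching by blast
    have "root_row a (insert (p, i) G) i j
      = (\<Sum>k\<in>new_parents a G i. a i k * (of_bool (tree_root (insert (p, i) G) i = j)
                                          - of_bool (tree_root (insert (p, i) G) k = j)))"
      unfolding root_row_def by (rule kirchhoff_row_forest[OF wd br subset_insertI])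
    also have "\<dots> = (\<Sum>k\<in>new_parents a G i. a i k * (h p - h k))"
      by (rule sum.cong) (simp_all add: h_def root_attach[OF G' p] new_parents_def)
    finally show ?thesis
      using sg_weight_insert[OF forest_attach(2)[OF G' p]]
      by (simp add: sum_distrib_left algebra_simps)
  qed
  have "(\<Sum>p\<in>new_parents a G i. \<Sum>k\<in>new_parents a G i. a i p * a i k * sg_weight a G * (h p - h k))
      = sg_weight a G * (\<Sum>p\<in>new_parents a G i. \<Sum>k\<in>new_parents a G i. a i p * a i k * (h p - h k))"
    by (simp add: sum_distrib_left algebra_simps)
  also have "\<dots> = 0" by (simp add: antisymmetric_double_sum)
  finally show ?thesis using row by simp
qed

lemma kirchhoff_forest_matrix_entry:
  fixes a :: "'n::finite \<Rightarrow> 'n \<Rightarrow> real"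
  assumes wd: "weighted_digraph a"
  shows "(kirchhoff a ** forest_matrix a m) $ i $ j = (\<Sum>G\<in>rooted_forests a m i. sg_weight a G *
      (\<Sum>k\<in>new_parents a G i. a i k * (of_bool (i = j) - of_bool (tree_root G k = j))))"
proof -
  have diff: "forest_matrix a m $ i $ j - forest_matrix a m $ k $ j = (\<Sum>F\<in>forests a m.
      sg_weight a F * (of_bool (tree_root F i = j) - of_bool (tree_root F k = j)))" for k
    unfolding forest_matrix_def by (simp only: vec_lambda_beta sum_subtractf[symmetric] right_diff_distrib)
  have "(kirchhoff a ** forest_matrix a m) $ i $ j = (\<Sum>k\<in>UNIV. \<Sum>F\<in>forests a m.
      a i k * (sg_weight a F * (of_bool (tree_root F i = j) - of_bool (tree_root F k = j))))"
    by (simp only: kirchhoff_mult_mat diff sum_distrib_left)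
  also have "\<dots> = (\<Sum>F\<in>forests a m. sg_weight a F * root_row a F i j)"
    by (subst sum.swap) (simp add: root_row_def sum_distrib_left algebra_simps)
  also have "\<dots> = (\<Sum>F\<in>rooted_forests a m i. sg_weight a F * root_row a F i j)"
  proof (cases m)
    case 0
    then show ?thesis by (simp add: forests_zero rooted_forests_zero)
  next
    case (Suc m')
    then show ?thesis
      using sum_forests_Suc[of "\<lambda>F. sg_weight a F * root_row a F i j" a m' i]
        root_row_attached[OF wd] by simp
  qed
  also have "\<dots> = (\<Sum>G\<in>rooted_forests a m i. sg_weight a G *
      (\<Sum>k\<in>new_parents a G i. a i k * (of_bool (i = j) - of_bool (tree_root G k = j))))"
  proof (rule sum.cong[OF refl])
    fix G assume G: "G \<in> rooted_forests a m i"
    then have "root_row a G i j = (\<Sum>k\<in>new_parents a G i.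
        a i k * (of_bool (tree_root G i = j) - of_bool (tree_root G k = j)))"
      unfolding root_row_def using rooted_forestsD[OF G]
      by (intro kirchhoff_row_forest[OF wd _ subset_refl, where h = "\<lambda>r. of_bool (r = j)"]) blast
    then show "sg_weight a G * root_row a G i j = sg_weight a G *
        (\<Sum>k\<in>new_parents a G i. a i k * (of_bool (i = j) - of_bool (tree_root G k = j)))"
      using rooted_forestsD[OF G] by simp
  qed
  finally show ?thesis .
qed

lemma forest_matrix_Suc_entry:
  "forest_matrix a (Suc m) $ i $ j = of_bool (i = j) * (\<Sum>F\<in>rooted_forests a (Suc m) i. sg_weight a F)
     + (\<Sum>G\<in>rooted_forests a m i. \<Sum>p\<in>new_parents a G i. a i p * sg_weight a G * of_bool (tree_root G p = j))"
proof -
  have "forest_matrix a (Suc m) $ i $ j = (\<Sum>F\<in>rooted_forests a (Suc m) i. sg_weight a F * of_bool (tree_root F i = j))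
     + (\<Sum>G\<in>rooted_forests a m i. \<Sum>p\<in>new_parents a G i.
         sg_weight a (insert (p, i) G) * of_bool (tree_root (insert (p, i) G) i = j))"
    unfolding forest_matrix_def vec_lambda_beta by (rule sum_forests_Suc)
  also have "(\<Sum>F\<in>rooted_forests a (Suc m) i. sg_weight a F * of_bool (tree_root F i = j))
      = of_bool (i = j) * (\<Sum>F\<in>rooted_forests a (Suc m) i. sg_weight a F)"
    by (cases "i = j") (auto simp: rooted_forestsD intro: sum.cong)
  also have "(\<Sum>G\<in>rooted_forests a m i. \<Sum>p\<in>new_parents a G i.
         sg_weight a (insert (p, i) G) * of_bool (tree_root (insert (p, i) G) i = j))
      = (\<Sum>G\<in>rooted_forests a m i. \<Sum>p\<in>new_parents a G i. a i p * sg_weight a G * of_bool (tree_root G p = j))"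
  proof (intro sum.cong refl)
    fix G p assume G: "G \<in> rooted_forests a m i" and p: "p \<in> new_parents a G i"
    have G': "out_forest a G" "is_root G i" using rooted_forestsD[OF G] by auto
    show "sg_weight a (insert (p, i) G) * of_bool (tree_root (insert (p, i) G) i = j)
        = a i p * sg_weight a G * of_bool (tree_root G p = j)"
      using sg_weight_insert[OF forest_attach(2)[OF G' p]] root_attach(2)[OF G' p] by simp
  qed
  finally show ?thesis .
qed

lemma forest_weight_Suc:
  "forest_weight a (Suc m) = (\<Sum>F\<in>rooted_forests a (Suc m) i. sg_weight a F)
     + (\<Sum>G\<in>rooted_forests a m i. \<Sum>p\<in>new_parents a G i. a i p * sg_weight a G)"
proof -
  have "sg_weight a (insert (p, i) G) = a i p * sg_weight a G"
    if G: "G \<in> rooted_forests a m i" and p: "p \<in> new_parents a G i" for G p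
  proof -
    have "out_forest a G" "is_root G i" using rooted_forestsD[OF G] by auto
    from sg_weight_insert[OF forest_attach(2)[OF this p]] show ?thesis .
  qed
  then show ?thesis unfolding forest_weight_def sum_forests_Suc[of _ a m i] by simp
qed

theorem forest_recurrence:
  fixes a :: "'n::finite \<Rightarrow> 'n \<Rightarrow> real"
  assumes wd: "weighted_digraph a"
  shows "kirchhoff a ** forest_matrix a m + forest_matrix a (Suc m) = forest_weight a (Suc m) *\<^sub>R mat 1"
proof -
  have "(kirchhoff a ** forest_matrix a m) $ i $ j + forest_matrix a (Suc m) $ i $ j
      = of_bool (i = j) * forest_weight a (Suc m)" for i j
    unfolding kirchhoff_forest_matrix_entry[OF wd] forest_matrix_Suc_entry forest_weight_Suc[of a m i]
    by (simp add: sum_distrib_left sum_distrib_right sum.distrib[symmetric] algebra_simps)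
  then show ?thesis by (simp add: vec_eq_iff mat_def)
qed

lemma kirchhoff_kernel_max_closed:
  fixes a :: "'n::finite \<Rightarrow> 'n \<Rightarrow> real"
  assumes wd: "weighted_digraph a" and Lz: "kirchhoff a *v z = 0"
    and max: "\<And>k. z $ k \<le> z $ i" and arc: "a i k > 0"
  shows "z $ k = z $ i"
proof -
  have nonneg: "0 \<le> a i l * (z $ i - z $ l)" for l
    using wd max[of l] by (simp add: weighted_digraph_def)
  have "(\<Sum>l\<in>UNIV. a i l * (z $ i - z $ l)) = 0"
    using kirchhoff_mult_vec[of a z i] Lz by simp
  then have "\<forall>l\<in>UNIV. a i l * (z $ i - z $ l) = 0"
    using sum_nonneg_eq_0_iff[of UNIV "\<lambda>l. a i l * (z $ i - z $ l)"] nonneg by simp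
  then have "a i k * (z $ i - z $ k) = 0" by blast
  then show ?thesis using arc by simp
qed

text \<open>A vector z = L y in the kernel of L is nonpositive: at a vertex of the maximum set
  of z where y is minimal on that set, z = (L y) is a sum of nonpositive terms.\<close>

lemma kirchhoff_kernel_range_nonpos:
  fixes a :: "'n::finite \<Rightarrow> 'n \<Rightarrow> real"
  assumes wd: "weighted_digraph a" and Lz: "kirchhoff a *v z = 0" and zy: "z = kirchhoff a *v y"
  shows "z $ i \<le> 0"
proof -
  define M where "M = {i. \<forall>k. z $ k \<le> z $ i}"
  have "Max (range (\<lambda>k. z $ k)) \<in> range (\<lambda>k. z $ k)" by (rule Max_in) auto
  then obtain i0 where "z $ i0 = Max (range (\<lambda>k. z $ k))" by (metis rangeE)
  moreover have "z $ k \<le> Max (range (\<lambda>k. z $ k))" for k by (rule Max_ge) auto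
  ultimately have "i0 \<in> M" by (simp add: M_def)
  then obtain i1 where i1: "i1 \<in> M" and "\<not> (\<exists>k\<in>M. y $ k < y $ i1)"
    using arg_min_if_finite[OF finite, of M "\<lambda>k. y $ k"] by blast
  then have ymin: "y $ i1 \<le> y $ k" if "k \<in> M" for k using that by (simp add: not_less)
  have closed: "k \<in> M" if "a i1 k > 0" for k
    using kirchhoff_kernel_max_closed[OF wd Lz _ that] i1 by (simp add: M_def)
  have "z $ i \<le> z $ i1" using i1 by (simp add: M_def)
  also have "z $ i1 = (\<Sum>k\<in>UNIV. a i1 k * (y $ i1 - y $ k))"
    using kirchhoff_mult_vec[of a y i1] zy by simp
  also have "\<dots> \<le> 0"
  proof (rule sum_nonpos)
    fix k
    have "a i1 k \<ge> 0" using wd by (simp add: weighted_digraph_def)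
    then consider "a i1 k = 0" | "a i1 k > 0" by fastforce
    then show "a i1 k * (y $ i1 - y $ k) \<le> 0"
    proof cases
      case 2
      then show ?thesis using closed ymin by (simp add: mult_nonneg_nonpos)
    qed simp
  qed
  finally show ?thesis .
qed

lemma kirchhoff_kernel_inter_range:
  fixes a :: "'n::finite \<Rightarrow> 'n \<Rightarrow> real"
  assumes wd: "weighted_digraph a" and "kirchhoff a *v z = 0" and "z = kirchhoff a *v y"
  shows "z = 0"
proof -
  have "kirchhoff a *v (- z) = 0" "- z = kirchhoff a *v (- y)"
    using assms(2,3) matrix_vector_mult_diff_distrib[of "kirchhoff a" 0 z]
      matrix_vector_mult_diff_distrib[of "kirchhoff a" 0 y] by simp_all
  then have "z $ i \<le> 0" "(- z) $ i \<le> 0" for i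
    using kirchhoff_kernel_range_nonpos[OF wd] assms(2,3) by blast+
  then have "z $ i = 0" for i using antisym[of "z $ i" 0] by simp
  then show ?thesis by (simp add: vec_eq_iff)
qed

lemma projector_of_splitting:
  fixes L J X :: "real^'n^'n"
  assumes trivial: "\<And>z y. L *v z = 0 \<Longrightarrow> z = L *v y \<Longrightarrow> z = 0"
    and LJ: "L ** J = 0" and split: "mat 1 - J = L ** X"
  shows "J ** J = J" "mat_range J = mat_kernel L" "mat_kernel J = mat_range L"
proof -
  have decomp: "x - J *v x = L *v (X *v x)" for x
    using arg_cong[OF split, of "\<lambda>M. M *v x"]
    by (simp add: matrix_vector_mult_diff_rdistrib matrix_vector_mul_assoc)
  have LJx: "L *v (J *v x) = 0" for x using LJ by (simp add: matrix_vector_mul_assoc)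
  have fixed: "J *v w = w" if "L *v w = 0" for w
  proof -
    have "L *v (w - J *v w) = 0" using that LJx by (simp add: matrix_vector_mult_diff_distrib)
    then have "w - J *v w = 0" using trivial[OF _ decomp] by blast
    then show ?thesis by simp
  qed
  show "J ** J = J"
    unfolding matrix_eq by (simp add: matrix_vector_mul_assoc[symmetric] fixed LJx)
  show "mat_range J = mat_kernel L"
    unfolding mat_range_def mat_kernel_def using LJx fixed[symmetric] by (auto intro: range_eqI)
  show "mat_kernel J = mat_range L"
  proof
    show "mat_kernel J \<subseteq> mat_range L"
    proof
      fix x assume "x \<in> mat_kernel J"
      then have "x = L *v (X *v x)" using decomp[of x] by (simp add: mat_kernel_def)
      then show "x \<in> mat_range L" unfolding mat_range_def by (rule range_eqI)
    qed
    show "mat_range L \<subseteq> mat_kernel J"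
    proof
      fix x assume "x \<in> mat_range L"
      then obtain y where y: "x = L *v y" by (auto simp: mat_range_def)
      have "J *v x = L *v (y - X *v x)"
        using decomp[of x] y by (simp add: matrix_vector_mult_diff_distrib algebra_simps)
      then show "x \<in> mat_kernel J" using trivial LJx by (simp add: mat_kernel_def) metis
    qed
  qed
qed

text \<open>Under the same splitting R(L^2) = R(L), since L = L (J + (I - J)) = L^2 X.\<close>

lemma range_square_of_splitting:
  fixes L J X :: "real^'n^'n"
  assumes LJ: "L ** J = 0" and split: "mat 1 - J = L ** X"
  shows "mat_range (L ** L) = mat_range L"
proof
  show "mat_range (L ** L) \<subseteq> mat_range L"
    by (auto simp: mat_range_def matrix_vector_mul_assoc[symmetric])
  show "mat_range L \<subseteq> mat_range (L ** L)"
  proof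
    fix z assume "z \<in> mat_range L"
    then obtain y where y: "z = L *v y" by (auto simp: mat_range_def)
    have "L = L ** (J + (mat 1 - J))" by simp
    also have "\<dots> = (L ** L) ** X" using LJ split by (simp add: matrix_add_ldistrib matrix_mul_assoc)
    finally have "z = (L ** L) *v (X *v y)" using y by (metis matrix_vector_mul_assoc)
    then show "z \<in> mat_range (L ** L)" by (simp add: mat_range_def)
  qed
qed

lemma mat_index_eq_1:
  fixes L :: "real^'n^'n"
  assumes range: "mat_range (L ** L) = mat_range L" and singular: "L *v v = 0" "v \<noteq> 0"
  shows "mat_index L = 1"
  unfolding mat_index_def
proof (rule Least_equality)
  show "rank (matpow L (Suc 1)) = rank (matpow L 1)"
    using range by (simp add: numeral_2_eq_2 rank_dim_range mat_range_def)
  have "rank L \<noteq> CARD('n)" using singular matrix_nonfull_linear_equations_eq by blast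
  then have "rank (matpow L 1) \<noteq> rank (matpow L 0)" by (simp add: rank_I)
  then show "1 \<le> k" if "rank (matpow L (Suc k)) = rank (matpow L k)" for k
    using that by (cases k) auto
qed

definition max_forest_size :: "('n::finite \<Rightarrow> 'n \<Rightarrow> real) \<Rightarrow> nat" where
  "max_forest_size a = Max (card ` {F. out_forest a F})"

lemma max_forest_size_attained: "\<exists>F. out_forest a F \<and> card F = max_forest_size a"
proof -
  have "out_forest a {}" by (simp add: out_forest_iff_branching branching_empty)
  then have "max_forest_size a \<in> card ` {F. out_forest a F}"
    unfolding max_forest_size_def by (intro Max_in) auto
  then show ?thesis by auto
qed

lemma card_le_max_forest_size: "out_forest a F \<Longrightarrow> card F \<le> max_forest_size a"
  unfolding max_forest_size_def by (rule Max_ge) auto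

lemma max_out_forest_iff: "max_out_forest a F \<longleftrightarrow> F \<in> forests a (max_forest_size a)"
  using max_forest_size_attained[of a] card_le_max_forest_size[of a]
  by (force simp: max_out_forest_def forests_def)

lemma forests_beyond_max: "forests a (Suc (max_forest_size a)) = {}"
  using card_le_max_forest_size by (fastforce simp: forests_def)

lemma forest_weight_max_pos:
  fixes a :: "'n::finite \<Rightarrow> 'n \<Rightarrow> real"
  assumes wd: "weighted_digraph a"
  shows "forest_weight a (max_forest_size a) > 0"
proof -
  obtain G where G: "out_forest a G" "card G = max_forest_size a"
    using max_forest_size_attained by blast
  show ?thesis unfolding forest_weight_def
  proof (rule sum_pos2)
    show "G \<in> forests a (max_forest_size a)" using G by (simp add: forests_def)
    show "0 < sg_weight a G"
      using G unfolding sg_weight_def by (intro prod_pos) (auto simp: out_forest_def arcs_def)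
    show "0 \<le> sg_weight a F" for F
      using wd unfolding sg_weight_def weighted_digraph_def by (intro prod_nonneg) auto
  qed simp
qed

lemma norm_max_out_forest_matrix_eq:
  "norm_max_out_forest_matrix a
     = (1 / forest_weight a (max_forest_size a)) *\<^sub>R forest_matrix a (max_forest_size a)"
proof -
  have "{F. max_out_forest a F \<and> in_tree_rooted_at F i j}
      = {F \<in> forests a (max_forest_size a). tree_root F i = j}" for i j
    using in_tree_rooted_at_iff by (auto simp: max_out_forest_iff forests_def out_forest_iff_branching)
  moreover have "(\<Sum>F\<in>{F \<in> forests a m. tree_root F i = j}. sg_weight a F)
      = (\<Sum>F\<in>forests a m. sg_weight a F * of_bool (tree_root F i = j))" for m i j
    by (simp add: sum.inter_filter[symmetric] Collect_conj_eq)
  ultimately show ?thesis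
    by (simp add: vec_eq_iff norm_max_out_forest_matrix_def forest_matrix_def forest_weight_def
        max_out_forest_iff Collect_mem_eq)
qed

text \<open>The recurrence at the maximal order gives L J = 0, as there are no larger forests.\<close>

lemma kirchhoff_norm_max_out_forest_matrix:
  fixes a :: "'n::finite \<Rightarrow> 'n \<Rightarrow> real"
  assumes wd: "weighted_digraph a"
  shows "kirchhoff a ** norm_max_out_forest_matrix a = 0"
proof -
  have "forest_matrix a (Suc (max_forest_size a)) = 0" "forest_weight a (Suc (max_forest_size a)) = 0"
    by (simp_all add: forest_matrix_def forest_weight_def forests_beyond_max vec_eq_iff)
  then have "kirchhoff a ** forest_matrix a (max_forest_size a) = 0"
    using forest_recurrence[OF wd, of "max_forest_size a"] by simp
  then show ?thesis
    by (simp add: norm_max_out_forest_matrix_eq matrix_scalar_ac scalar_matrix_assoc[symmetric])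
qed

text \<open>The recurrence at the order just below the maximum gives I - J = L X.\<close>

lemma identity_minus_norm_max_out_forest_matrix:
  fixes a :: "'n::finite \<Rightarrow> 'n \<Rightarrow> real"
  assumes wd: "weighted_digraph a"
  shows "\<exists>X. mat 1 - norm_max_out_forest_matrix a = kirchhoff a ** X"
proof (cases "max_forest_size a")
  case 0
  have "tree_root {} i = i" for i :: 'n by (rule root_of_root) (simp_all add: branching_empty is_root_def)
  then have "forest_matrix a 0 = mat 1" "forest_weight a 0 = 1"
    by (simp_all add: forest_matrix_def forest_weight_def forests_zero sg_weight_def vec_eq_iff mat_def)
  then have "mat 1 - norm_max_out_forest_matrix a = kirchhoff a ** 0"
    using 0 by (simp add: norm_max_out_forest_matrix_eq)
  then show ?thesis ..
next
  case (Suc m)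
  define \<sigma> where "\<sigma> = forest_weight a (max_forest_size a)"
  have "\<sigma> > 0" using forest_weight_max_pos[OF wd] \<sigma>_def by simp
  have "mat 1 - norm_max_out_forest_matrix a
      = (1 / \<sigma>) *\<^sub>R (\<sigma> *\<^sub>R mat 1 - forest_matrix a (max_forest_size a))"
    using \<open>\<sigma> > 0\<close> by (simp add: norm_max_out_forest_matrix_eq \<sigma>_def scaleR_diff_right)
  also have "\<dots> = kirchhoff a ** ((1 / \<sigma>) *\<^sub>R forest_matrix a m)"
    using forest_recurrence[OF wd, of m] Suc \<sigma>_def
    by (simp add: matrix_scalar_ac scalar_matrix_assoc[symmetric] diff_eq_eq)
  finally show ?thesis ..
qed

theorem proposition6:
  fixes a :: "'n::finite \<Rightarrow> 'n \<Rightarrow> real"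
  assumes "weighted_digraph a"
  shows "is_eigenprojection (norm_max_out_forest_matrix a) (kirchhoff a)
    \<and> mat_index (kirchhoff a) = 1
    \<and> mat_range (norm_max_out_forest_matrix a) = mat_kernel (kirchhoff a)
    \<and> mat_kernel (norm_max_out_forest_matrix a) = mat_range (kirchhoff a)"
proof -
  let ?J = "norm_max_out_forest_matrix a" and ?L = "kirchhoff a"
  have LJ: "?L ** ?J = 0" by (rule kirchhoff_norm_max_out_forest_matrix[OF assms])
  obtain X where split: "mat 1 - ?J = ?L ** X"
    using identity_minus_norm_max_out_forest_matrix[OF assms] by blast
  note projector = projector_of_splitting[OF kirchhoff_kernel_inter_range[OF assms] LJ split]
  define ones :: "real^'n" where "ones = (\<chi> i. 1)"
  have "?L *v ones = 0" "ones \<noteq> 0" by (simp_all add: vec_eq_iff kirchhoff_mult_vec ones_def)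
  then have index: "mat_index ?L = 1"
    by (rule mat_index_eq_1[OF range_square_of_splitting[OF LJ split]])
  show ?thesis using projector index by (simp add: is_eigenprojection_def)
qed

end
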